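(* There exist positive numbers $w$ and $a$ such that $\gamma_2(B_2^2(0,w))=\gamma_1((-a,a))$ and $\gamma_2^+(B_2^2(0,w))>\gamma_1^+((-a,a))$.
   Context: $\gamma_n$ denotes the standard Gaussian probability measure on $\mathbb{R}^n$. $B_2^k(0,r)=\{x\in\mathbb{R}^k:|x|\le r\}$. For $A\subseteq\mathbb{R}^n$, $A_t=\{x: d(x,A)<t\}$ and the Gaussian boundary measure is $\gamma_n^+(A)=\liminf_{t\to0}\frac{\gamma_n(A_t)-\gamma_n(A)}{t}$. *)

theory Defs
  imports "HOL-Analysis.Analysis"
begin

definition gauss :: "'a::euclidean_space measure" where
  "gauss = density lborel
     (\<lambda>x. ennreal ((2 * pi) powr (- real DIM('a) / 2) * exp (- (norm x)\<^sup>2 / 2)))"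

definition gauss_measure :: "'a::euclidean_space set \<Rightarrow> real" where
  "gauss_measure A = measure gauss A"

definition nbhd :: "'a::euclidean_space set \<Rightarrow> real \<Rightarrow> 'a set" where
  "nbhd A t = {x. infdist x A < t}"

definition gauss_boundary :: "'a::euclidean_space set \<Rightarrow> ereal" where
  "gauss_boundary A =
     Liminf (at_right 0) (\<lambda>t. ereal ((gauss_measure (nbhd A t) - gauss_measure A) / t))"

end

(*
  In the plane the disc of radius w has Gaussian measure 1 - exp(-w^2/2) (layer-cake formula),
  and its t-neighbourhood contains the discs of radius below w + t, so its boundary measure is
  at least w exp(-w^2/2): w times the measure of the complement. For the interval (-a,a) the complement
  has measure 2 T(a), T the Gaussian tail, and the boundary measure is at most 2 phi(a); Mills'
  inequality T(a) >= phi(a) a / (a^2 + 1) bounds their ratio by a + 1/a. For w = 10 the matching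
  a, with 2 T(a) = exp(-50), lies in [1, 49/5] by the two Mills bounds and the intermediate value
  theorem, and there a + 1/a < 10.
*)
theory Submission
  imports Defs "HOL-Probability.Probability" "HOL-Real_Asymp.Real_Asymp"
begin

lemma sets_gauss [simp]: "sets (gauss :: 'a::euclidean_space measure) = sets borel"
  by (simp add: gauss_def)

lemma space_gauss [simp]: "space (gauss :: 'a::euclidean_space measure) = UNIV"
  by (simp add: gauss_def)

lemma gauss_real_eq_std_normal: "(gauss :: real measure) = density lborel std_normal_density"
proof -
  have "(2 * pi) powr (- real DIM(real) / 2) = 1 / sqrt (2 * pi)"
    by (simp add: powr_minus_divide powr_half_sqrt)
  then show ?thesis
    unfolding gauss_def by (simp add: std_normal_density_def)
qed

interpretation gauss_real: prob_space "gauss :: real measure"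
  unfolding gauss_real_eq_std_normal by (rule prob_space_normal_density) simp

lemma emeasure_gauss_real:
  "A \<in> sets borel \<Longrightarrow>
    emeasure (gauss :: real measure) A = (\<integral>\<^sup>+x. ennreal (std_normal_density x) * indicator A x \<partial>lborel)"
  unfolding gauss_real_eq_std_normal by (rule emeasure_density) auto

lemma DERIV_std_normal_density:
  "(std_normal_density has_real_derivative - x * std_normal_density x) (at x)"
proof -
  define c where "c = 1 / sqrt (2 * pi)"
  have "((\<lambda>x. c * exp (- x\<^sup>2 / 2)) has_real_derivative - x * (c * exp (- x\<^sup>2 / 2))) (at x)"
    by (auto intro!: derivative_eq_intros)
  then show ?thesis
    by (simp add: std_normal_density_def[abs_def] c_def)
qed

lemma std_normal_density_le_one: "std_normal_density x \<le> 1"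
proof -
  have "exp (- x\<^sup>2 / 2) \<le> 1" "1 \<le> sqrt (2 * pi)"
    using pi_gt3 by auto
  then have "exp (- x\<^sup>2 / 2) \<le> sqrt (2 * pi)"
    by linarith
  then show ?thesis
    unfolding std_normal_density_def by (simp add: divide_le_eq)
qed

lemma std_normal_density_antimono:
  assumes "0 \<le> x" "x \<le> y"
  shows "std_normal_density y \<le> std_normal_density x"
proof -
  have "x\<^sup>2 \<le> y\<^sup>2"
    using assms by (intro power_mono) auto
  then show ?thesis
    by (simp add: std_normal_density_def divide_right_mono)
qed

definition gauss_tail :: "real \<Rightarrow> real" where
  "gauss_tail a = measure (gauss :: real measure) {a..}"

lemma nn_integral_std_normal_density_atLeast:
  "(\<integral>\<^sup>+x. ennreal (std_normal_density x) * indicator {a..} x \<partial>lborel) = ennreal (gauss_tail a)"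
  by (simp add: gauss_tail_def gauss_real.emeasure_eq_measure[symmetric] emeasure_gauss_real)

lemma measure_gauss_atMost_uminus: "measure (gauss :: real measure) {..-a} = gauss_tail a"
proof -
  have "emeasure (gauss :: real measure) {..-a}
      = (\<integral>\<^sup>+x. ennreal (std_normal_density x) * indicator {..-a} x \<partial>lborel)"
    by (simp add: emeasure_gauss_real)
  also have "\<dots> = ennreal \<bar>-1\<bar> *
      (\<integral>\<^sup>+x. ennreal (std_normal_density (0 + (-1) * x)) * indicator {..-a} (0 + (-1) * x) \<partial>lborel)"
    by (rule nn_integral_real_affine) auto
  also have "\<dots> = (\<integral>\<^sup>+x. ennreal (std_normal_density x) * indicator {a..} x \<partial>lborel)"
    by (auto simp: std_normal_density_def indicator_def intro!: nn_integral_cong)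
  finally show ?thesis
    by (simp add: nn_integral_std_normal_density_atLeast gauss_real.emeasure_eq_measure gauss_tail_def)
qed

lemma gauss_measure_symmetric_interval:
  assumes "0 < a"
  shows "gauss_measure {-a<..<a} = 1 - 2 * gauss_tail a"
proof -
  have "{-a<..<a} = UNIV - ({..-a} \<union> {a..})"
    by auto
  then have "measure gauss {-a<..<a} = 1 - measure gauss ({..-a} \<union> {a..})"
    using gauss_real.prob_compl[of "{..-a} \<union> {a..}"] by simp
  also have "measure gauss ({..-a} \<union> {a..}) = measure gauss {..-a} + measure gauss {a..}"
    using assms by (intro gauss_real.finite_measure_Union) auto
  finally show ?thesis
    unfolding gauss_measure_def measure_gauss_atMost_uminus gauss_tail_def by simp
qed

lemma gauss_tail_le:
  assumes "0 < a"
  shows "gauss_tail a \<le> std_normal_density a / a"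
proof -
  have "ennreal (gauss_tail a) = (\<integral>\<^sup>+x. ennreal (std_normal_density x) * indicator {a..} x \<partial>lborel)"
    by (simp add: nn_integral_std_normal_density_atLeast)
  also have "\<dots> \<le> (\<integral>\<^sup>+x. ennreal (x * std_normal_density x / a) * indicator {a..} x \<partial>lborel)"
    using assms
    by (intro nn_integral_mono) (auto simp: indicator_def field_simps intro!: ennreal_leI mult_right_mono)
  also have "\<dots> = 0 - (- std_normal_density a / a)"
    using assms
    by (intro nn_integral_FTC_atLeast)
       (auto intro!: derivative_eq_intros DERIV_std_normal_density simp: std_normal_density_def, real_asymp)
  finally show ?thesis
    using assms by simp
qed

lemma gauss_tail_ge:
  assumes "1 \<le> a"
  shows "std_normal_density a * a / (a\<^sup>2 + 1) \<le> gauss_tail a"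
proof -
  define h where "h x = std_normal_density x * (1 - 2 / (x\<^sup>2 + 1)\<^sup>2)" for x
  have deriv: "((\<lambda>x. - (std_normal_density x * x / (x\<^sup>2 + 1))) has_real_derivative h x) (at x)" for x
  proof -
    have "0 < x\<^sup>2 + 1"
      by (simp add: add_nonneg_pos)
    then show ?thesis
      unfolding h_def
      by (auto intro!: derivative_eq_intros DERIV_std_normal_density simp: divide_simps)
         (simp add: algebra_simps power2_eq_square)
  qed
  have h_nonneg: "0 \<le> h x" if "1 \<le> x" for x
  proof -
    have "1 \<le> x\<^sup>2"
      using that by (simp add: one_le_power)
    then have "2\<^sup>2 \<le> (x\<^sup>2 + 1)\<^sup>2"
      by (intro power_mono) auto
    then have "2 / (x\<^sup>2 + 1)\<^sup>2 \<le> 1"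
      by (simp add: divide_le_eq)
    then show ?thesis
      unfolding h_def by simp
  qed
  have "(\<integral>\<^sup>+x. ennreal (h x) * indicator {a..} x \<partial>lborel)
      = 0 - (- (std_normal_density a * a / (a\<^sup>2 + 1)))"
  proof (rule nn_integral_FTC_atLeast)
    show "h \<in> borel_measurable borel"
      unfolding h_def by measurable
    show "((\<lambda>x. - (std_normal_density x * x / (x\<^sup>2 + 1))) \<longlongrightarrow> 0) at_top"
      unfolding std_normal_density_def by real_asymp
  qed (use assms deriv h_nonneg in auto)
  then have "ennreal (std_normal_density a * a / (a\<^sup>2 + 1))
      = (\<integral>\<^sup>+x. ennreal (h x) * indicator {a..} x \<partial>lborel)"
    by simp
  also have "\<dots> \<le> (\<integral>\<^sup>+x. ennreal (std_normal_density x) * indicator {a..} x \<partial>lborel)"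
    by (intro nn_integral_mono) (auto simp: h_def indicator_def intro!: ennreal_leI mult_left_le)
  finally show ?thesis
    by (simp add: nn_integral_std_normal_density_atLeast gauss_tail_def)
qed

lemma gauss_tail_diff:
  assumes "a \<le> b"
  shows "gauss_tail a - gauss_tail b = measure gauss {a..<b}"
proof -
  have "{a..} = {a..<b} \<union> {b..}" "{a..<b} \<inter> {b..} = {}"
    using assms by auto
  then show ?thesis
    using gauss_real.finite_measure_Union[of "{a..<b}" "{b..}"]
    unfolding gauss_tail_def by simp
qed

lemma measure_gauss_atLeastLessThan_le:
  assumes "0 \<le> a" "a \<le> b"
  shows "measure gauss {a..<b} \<le> (b - a) * std_normal_density a"
proof -
  have "emeasure gauss {a..<b} = (\<integral>\<^sup>+x. ennreal (std_normal_density x) * indicator {a..<b} x \<partial>lborel)"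
    by (simp add: emeasure_gauss_real)
  also have "\<dots> \<le> (\<integral>\<^sup>+x. ennreal (std_normal_density a) * indicator {a..<b} x \<partial>lborel)"
    using assms
    by (intro nn_integral_mono) (auto simp: indicator_def intro!: ennreal_leI std_normal_density_antimono)
  also have "\<dots> = ennreal (std_normal_density a) * ennreal (b - a)"
    using assms by (subst nn_integral_cmult_indicator) auto
  also have "\<dots> = ennreal ((b - a) * std_normal_density a)"
    using assms by (simp add: ennreal_mult mult.commute)
  finally show ?thesis
    using assms by (simp add: gauss_real.emeasure_eq_measure ennreal_le_iff)
qed

lemma continuous_on_gauss_tail: "continuous_on {0..} gauss_tail"
proof (rule lipschitz_on_continuous_on)
  have "\<bar>gauss_tail x - gauss_tail y\<bar> \<le> y - x" if "0 \<le> x" "x \<le> y" for x y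
    using that gauss_tail_diff[of x y] measure_gauss_atLeastLessThan_le[of x y]
      std_normal_density_le_one[of x] measure_nonneg[of gauss "{x..<y}"]
    by (smt (verit) mult_left_le)
  then show "lipschitz_on 1 {0..} gauss_tail"
    unfolding lipschitz_on_def dist_real_def
    by (smt (verit) abs_minus_commute atLeast_iff)
qed

lemma nn_integral_exp_norm_layer_cake:
  fixes S :: "'a::euclidean_space set"
  assumes S [measurable]: "S \<in> sets lborel"
  shows "(\<integral>\<^sup>+x. ennreal (exp (- (norm x)\<^sup>2 / 2)) * indicator S x \<partial>lborel) =
    (\<integral>\<^sup>+s. ennreal (s * exp (- s\<^sup>2 / 2)) * emeasure lborel (S \<inter> cball 0 s) \<partial>lborel)"
proof -
  define g where "g s = s * exp (- s\<^sup>2 / 2)" for s :: real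
  have tail: "(\<integral>\<^sup>+s. ennreal (g s) * indicator {b..} s \<partial>lborel) = ennreal (exp (- b\<^sup>2 / 2))"
    if "0 \<le> b" for b
  proof -
    have "(\<integral>\<^sup>+s. ennreal (g s) * indicator {b..} s \<partial>lborel) = 0 - (- exp (- b\<^sup>2 / 2))"
      using that
      by (intro nn_integral_FTC_atLeast) (auto intro!: derivative_eq_intros simp: g_def, real_asymp)
    then show ?thesis
      by simp
  qed
  have "(\<integral>\<^sup>+x. ennreal (exp (- (norm x)\<^sup>2 / 2)) * indicator S x \<partial>lborel)
      = (\<integral>\<^sup>+x. (\<integral>\<^sup>+s. ennreal (g s) * indicator {norm x..} s \<partial>lborel) * indicator S x \<partial>lborel)"
    by (simp add: tail)
  also have "\<dots> = (\<integral>\<^sup>+x. (\<integral>\<^sup>+s. ennreal (g s) * indicator {norm x..} s * indicator S x \<partial>lborel) \<partial>lborel)"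
    by (intro nn_integral_cong, subst nn_integral_multc) (auto simp: g_def)
  also have "\<dots> = (\<integral>\<^sup>+s. (\<integral>\<^sup>+x. ennreal (g s) * indicator {norm x..} s * indicator S x \<partial>lborel) \<partial>lborel)"
    by (rule lborel_pair.Fubini'[symmetric]) (unfold indicator_def g_def, simp add: case_prod_beta, measurable)
  also have "\<dots> = (\<integral>\<^sup>+s. ennreal (g s) * emeasure lborel (S \<inter> cball 0 s) \<partial>lborel)"
  proof (intro nn_integral_cong)
    fix s :: real
    have "(\<integral>\<^sup>+x. ennreal (g s) * indicator {norm x..} s * indicator S x \<partial>lborel)
        = (\<integral>\<^sup>+x. ennreal (g s) * indicator (S \<inter> cball 0 s) x \<partial>lborel)"
      by (intro nn_integral_cong) (auto simp: indicator_def)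
    also have "\<dots> = ennreal (g s) * emeasure lborel (S \<inter> cball 0 s)"
      using S by (intro nn_integral_cmult_indicator) auto
    finally show "(\<integral>\<^sup>+x. ennreal (g s) * indicator {norm x..} s * indicator S x \<partial>lborel)
        = ennreal (g s) * emeasure lborel (S \<inter> cball 0 s)" .
  qed
  finally show ?thesis
    by (simp add: g_def)
qed

lemma emeasure_lborel_cball_plane:
  assumes "DIM('a::euclidean_space) = 2" "0 \<le> r"
  shows "emeasure lborel (cball (0::'a) r) = ennreal (pi * r\<^sup>2)"
  using assms unit_ball_vol_even[of 1] by (simp add: emeasure_cball)

lemma nn_integral_exp_norm_outside_cball_plane:
  assumes "DIM('a::euclidean_space) = 2" "0 \<le> R"
  shows "(\<integral>\<^sup>+x. ennreal (exp (- (norm x)\<^sup>2 / 2)) * indicator {x::'a. R < norm x} x \<partial>lborel)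
    = ennreal (2 * pi * exp (- R\<^sup>2 / 2))"
proof -
  define f where "f s = pi * (s\<^sup>2 - R\<^sup>2) * s * exp (- s\<^sup>2 / 2)" for s
  have annulus: "ennreal (s * exp (- s\<^sup>2 / 2)) * emeasure lborel ({x::'a. R < norm x} \<inter> cball 0 s)
      = ennreal (f s) * indicator {R..} s" for s
  proof (cases "R \<le> s")
    case True
    have "{x::'a. R < norm x} \<inter> cball 0 s = cball 0 s - cball 0 R"
      by auto
    then have "emeasure lborel ({x::'a. R < norm x} \<inter> cball 0 s) = ennreal (pi * s\<^sup>2) - ennreal (pi * R\<^sup>2)"
      using True assms
      by (simp add: emeasure_Diff emeasure_lborel_cball_plane cball_subset_cball_iff)
    also have "\<dots> = ennreal (pi * (s\<^sup>2 - R\<^sup>2))"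
      using True assms by (simp add: ennreal_minus power_mono algebra_simps)
    finally show ?thesis
      using True assms by (simp add: f_def ennreal_mult'[symmetric] mult_ac)
  next
    case False
    then have "{x::'a. R < norm x} \<inter> cball 0 s = {}"
      by auto
    then show ?thesis
      using False by simp
  qed
  have "(\<integral>\<^sup>+x. ennreal (exp (- (norm x)\<^sup>2 / 2)) * indicator {x::'a. R < norm x} x \<partial>lborel)
      = (\<integral>\<^sup>+s. ennreal (f s) * indicator {R..} s \<partial>lborel)"
    using nn_integral_exp_norm_layer_cake[of "{x::'a. R < norm x}"] unfolding annulus by simp
  also have "\<dots> = 0 - (- pi * (R\<^sup>2 + 2 - R\<^sup>2) * exp (- R\<^sup>2 / 2))"
  proof (rule nn_integral_FTC_atLeast[where F = "\<lambda>s. - pi * (s\<^sup>2 + 2 - R\<^sup>2) * exp (- s\<^sup>2 / 2)"])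
    fix s assume "R \<le> s"
    then have "R\<^sup>2 \<le> s\<^sup>2"
      using assms by (intro power_mono) auto
    then show "0 \<le> f s"
      using \<open>R \<le> s\<close> assms unfolding f_def by simp
  next
    show "((\<lambda>s. - pi * (s\<^sup>2 + 2 - R\<^sup>2) * exp (- s\<^sup>2 / 2)) \<longlongrightarrow> 0) at_top"
      by real_asymp
  qed (auto intro!: derivative_eq_intros simp: f_def field_simps power2_eq_square)
  finally show ?thesis
    by simp
qed

lemma emeasure_gauss_plane:
  assumes "DIM('a::euclidean_space) = 2" "A \<in> sets borel"
  shows "emeasure (gauss :: 'a measure) A =
    ennreal (1 / (2 * pi)) * (\<integral>\<^sup>+x. ennreal (exp (- (norm x)\<^sup>2 / 2)) * indicator A x \<partial>lborel)"
proof -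
  have "(2 * pi) powr (- real DIM('a) / 2) = 1 / (2 * pi)"
    using assms by (simp add: powr_minus_divide)
  then have "emeasure (gauss :: 'a measure) A =
      (\<integral>\<^sup>+x. ennreal (1 / (2 * pi)) * (ennreal (exp (- (norm x)\<^sup>2 / 2)) * indicator A x) \<partial>lborel)"
    unfolding gauss_def using assms
    by (subst emeasure_density) (auto simp: indicator_def ennreal_mult'[symmetric] intro!: nn_integral_cong)
  also have "\<dots> = ennreal (1 / (2 * pi)) * (\<integral>\<^sup>+x. ennreal (exp (- (norm x)\<^sup>2 / 2)) * indicator A x \<partial>lborel)"
    using assms by (intro nn_integral_cmult) auto
  finally show ?thesis .
qed

lemma emeasure_gauss_outside_cball_plane:
  assumes "DIM('a::euclidean_space) = 2" "0 \<le> R"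
  shows "emeasure (gauss :: 'a measure) {x. R < norm x} = ennreal (exp (- R\<^sup>2 / 2))"
proof -
  have "{x::'a. R < norm x} \<in> sets borel"
    by measurable
  then have "emeasure (gauss :: 'a measure) {x. R < norm x}
      = ennreal (1 / (2 * pi)) * ennreal (2 * pi * exp (- R\<^sup>2 / 2))"
    by (simp only: emeasure_gauss_plane[OF assms(1)] nn_integral_exp_norm_outside_cball_plane[OF assms])
  also have "\<dots> = ennreal (exp (- R\<^sup>2 / 2))"
    by (simp add: ennreal_mult[symmetric])
  finally show ?thesis .
qed

lemma prob_space_gauss_plane:
  assumes "DIM('a::euclidean_space) = 2"
  shows "prob_space (gauss :: 'a measure)"
proof
  have "AE x in gauss. x \<in> UNIV \<longleftrightarrow> x \<in> {x::'a. 0 < norm x}"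
    unfolding gauss_def using AE_lborel_singleton[of 0] by (auto simp: AE_density)
  then have "emeasure (gauss :: 'a measure) UNIV = emeasure gauss {x::'a. 0 < norm x}"
    by (intro emeasure_eq_AE) auto
  then show "emeasure (gauss :: 'a measure) (space gauss) = 1"
    using emeasure_gauss_outside_cball_plane[OF assms, of 0] by simp
qed

lemma gauss_measure_cball_plane:
  assumes "DIM('a::euclidean_space) = 2" "0 \<le> R"
  shows "gauss_measure (cball (0::'a) R) = 1 - exp (- R\<^sup>2 / 2)"
proof -
  interpret prob_space "gauss :: 'a measure"
    using assms(1) by (rule prob_space_gauss_plane)
  have "cball (0::'a) R = space gauss - {x. R < norm x}"
    by auto
  then show ?thesis
    using prob_compl[of "{x. R < norm x}"] emeasure_gauss_outside_cball_plane[OF assms]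
    by (simp add: gauss_measure_def emeasure_eq_measure)
qed

lemma open_nbhd: "open (nbhd A t)"
  unfolding nbhd_def by (intro open_Collect_less continuous_intros)

lemma ball_subset_nbhd_cball:
  assumes "0 \<le> w" "0 < t"
  shows "ball 0 (w + t) \<subseteq> nbhd (cball (0::'a::euclidean_space) w) t"
proof
  fix x :: 'a
  assume "x \<in> ball 0 (w + t)"
  show "x \<in> nbhd (cball 0 w) t"
  proof (cases "norm x \<le> w")
    case True
    then show ?thesis
      using assms by (simp add: nbhd_def)
  next
    case False
    then have "0 < norm x" "w / norm x \<le> 1"
      using assms by (auto simp: divide_le_eq)
    define y where "y = (w / norm x) *\<^sub>R x"
    have "norm y = w"
      using \<open>0 < norm x\<close> assms by (simp add: y_def)
    have "x - y = (1 - w / norm x) *\<^sub>R x"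
      by (simp add: y_def algebra_simps)
    then have "dist x y = (1 - w / norm x) * norm x"
      using \<open>w / norm x \<le> 1\<close> by (simp add: dist_norm)
    also have "\<dots> = norm x - w"
      using \<open>0 < norm x\<close> by (simp add: field_simps)
    finally have "infdist x (cball 0 w) \<le> norm x - w"
      using \<open>norm y = w\<close> by (intro infdist_le2[of y]) auto
    then show ?thesis
      using \<open>x \<in> ball 0 (w + t)\<close> by (simp add: nbhd_def)
  qed
qed

lemma nbhd_symmetric_interval_subset:
  assumes "0 < a"
  shows "nbhd {-a<..<a} t \<subseteq> {-(a + t)<..<a + t}"
proof
  fix x :: real
  assume "x \<in> nbhd {-a<..<a} t"
  then have "(INF y\<in>{-a<..<a}. dist x y) < t"
    using assms by (simp add: nbhd_def infdist_def)
  then obtain y where "y \<in> {-a<..<a}" "dist x y < t"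
    using assms by (subst (asm) cINF_less_iff) auto
  then show "x \<in> {-(a + t)<..<a + t}"
    by (auto simp: dist_real_def)
qed

lemma gauss_measure_nbhd_cball_plane_ge:
  assumes "DIM('a::euclidean_space) = 2" "0 \<le> w" "0 < t"
  shows "1 - exp (- (w + t)\<^sup>2 / 2) \<le> gauss_measure (nbhd (cball (0::'a) w) t)"
proof (rule tendsto_upperbound)
  interpret prob_space "gauss :: 'a measure"
    using assms(1) by (rule prob_space_gauss_plane)
  show "((\<lambda>s. 1 - exp (- s\<^sup>2 / 2)) \<longlongrightarrow> 1 - exp (- (w + t)\<^sup>2 / 2)) (at_left (w + t))"
    by (intro tendsto_intros) simp
  have "1 - exp (- s\<^sup>2 / 2) \<le> gauss_measure (nbhd (cball (0::'a) w) t)" if "s \<in> {0<..<w + t}" for s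
  proof -
    have "cball (0::'a) s \<subseteq> nbhd (cball 0 w) t"
      using that ball_subset_nbhd_cball[of w t] assms by fastforce
    then have "measure gauss (cball (0::'a) s) \<le> measure gauss (nbhd (cball (0::'a) w) t)"
      by (intro finite_measure_mono) (auto intro!: borel_open open_nbhd)
    then show ?thesis
      using that gauss_measure_cball_plane[OF assms(1), of s] by (simp add: gauss_measure_def)
  qed
  then show "\<forall>\<^sub>F s in at_left (w + t). 1 - exp (- s\<^sup>2 / 2) \<le> gauss_measure (nbhd (cball (0::'a) w) t)"
    using eventually_at_left_real[of 0 "w + t"] assms by (auto elim!: eventually_mono)
qed simp

lemma gauss_boundary_cball_plane_ge:
  assumes "DIM('a::euclidean_space) = 2" "0 < w"
  shows "ereal (w * exp (- w\<^sup>2 / 2)) \<le> gauss_boundary (cball (0::'a) w)"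
proof -
  define F where "F r = 1 - exp (- r\<^sup>2 / 2)" for r :: real
  have "(F has_real_derivative w * exp (- w\<^sup>2 / 2)) (at w)"
    unfolding F_def by (auto intro!: derivative_eq_intros)
  then have "((\<lambda>t. ereal ((F (w + t) - F w) / t)) \<longlongrightarrow> ereal (w * exp (- w\<^sup>2 / 2))) (at_right 0)"
    unfolding DERIV_def by (simp add: filterlim_at_split)
  then have "ereal (w * exp (- w\<^sup>2 / 2)) = Liminf (at_right 0) (\<lambda>t. ereal ((F (w + t) - F w) / t))"
    by (intro lim_imp_Liminf[symmetric]) simp
  also have "\<dots> \<le> gauss_boundary (cball (0::'a) w)"
    unfolding gauss_boundary_def
  proof (intro Liminf_mono eventually_mono[OF eventually_at_right_less])
    fix t :: real
    assume "0 < t"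
    then show "ereal ((F (w + t) - F w) / t) \<le>
        ereal ((gauss_measure (nbhd (cball (0::'a) w) t) - gauss_measure (cball (0::'a) w)) / t)"
      using assms gauss_measure_nbhd_cball_plane_ge[OF assms(1), of w t] gauss_measure_cball_plane[OF assms(1), of w]
      by (simp add: F_def divide_right_mono)
  qed
  finally show ?thesis .
qed

lemma gauss_boundary_symmetric_interval_le:
  assumes "0 < a"
  shows "gauss_boundary {-a<..<a} \<le> ereal (2 * std_normal_density a)"
proof -
  have "gauss_boundary {-a<..<a} \<le>
      Limsup (at_right 0) (\<lambda>t. ereal ((gauss_measure (nbhd {-a<..<a} t) - gauss_measure {-a<..<a}) / t))"
    unfolding gauss_boundary_def by (rule Liminf_le_Limsup) simp
  also have "\<dots> \<le> ereal (2 * std_normal_density a)"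
  proof (intro Limsup_bounded eventually_mono[OF eventually_at_right_less])
    fix t :: real
    assume "0 < t"
    have "gauss_measure (nbhd {-a<..<a} t) \<le> gauss_measure {-(a + t)<..<a + t}"
      unfolding gauss_measure_def using nbhd_symmetric_interval_subset[OF assms]
      by (intro gauss_real.finite_measure_mono) (auto intro!: borel_open open_nbhd)
    then have "gauss_measure (nbhd {-a<..<a} t) - gauss_measure {-a<..<a} \<le> 2 * measure gauss {a..<a + t}"
      using assms \<open>0 < t\<close> gauss_tail_diff[of a "a + t"]
        gauss_measure_symmetric_interval[of a] gauss_measure_symmetric_interval[of "a + t"]
      by simp
    also have "\<dots> \<le> 2 * (t * std_normal_density a)"
      using assms \<open>0 < t\<close> measure_gauss_atLeastLessThan_le[of a "a + t"] by simp
    finally show "ereal ((gauss_measure (nbhd {-a<..<a} t) - gauss_measure {-a<..<a}) / t)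
        \<le> ereal (2 * std_normal_density a)"
      using \<open>0 < t\<close> by (simp add: divide_le_eq mult_ac)
  qed
  finally show ?thesis .
qed

lemma two_std_normal_density_less:
  assumes "1 \<le> a" "2 * gauss_tail a = exp (- w\<^sup>2 / 2)" "a\<^sup>2 + 1 < w * a"
  shows "2 * std_normal_density a < w * exp (- w\<^sup>2 / 2)"
proof -
  have "0 < gauss_tail a"
    using assms(2) by (smt (verit) exp_gt_zero)
  have "0 < a\<^sup>2 + 1"
    by (simp add: add_nonneg_pos)
  then have "std_normal_density a * a \<le> gauss_tail a * (a\<^sup>2 + 1)"
    using gauss_tail_ge[OF assms(1)] by (simp add: divide_le_eq)
  also have "\<dots> < (w * gauss_tail a) * a"
    using \<open>0 < gauss_tail a\<close> assms(3) by (simp add: mult_ac)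
  finally have "std_normal_density a < w * gauss_tail a"
    using assms(1) by (simp add: mult_less_cancel_right)
  then show ?thesis
    unfolding assms(2)[symmetric] by simp
qed

lemma sqrt_two_pi_bounds: "2 \<le> sqrt (2 * pi)" "sqrt (2 * pi) \<le> 3"
proof -
  have "sqrt 4 \<le> sqrt (2 * pi)" "sqrt (2 * pi) \<le> sqrt 9"
    using pi_gt3 pi_less_4 by (intro real_sqrt_le_mono; simp)+
  then show "2 \<le> sqrt (2 * pi)" "sqrt (2 * pi) \<le> 3"
    by simp_all
qed

lemma exp_neg_50_le_two_gauss_tail_1: "exp (- 50) \<le> 2 * gauss_tail 1"
proof -
  have "3 * exp (- 50) \<le> exp (99 / 2) * exp (- 50 :: real)"
    using exp_ge_add_one_self[of "99 / 2"] by (intro mult_right_mono) auto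
  also have "\<dots> = exp (- 1\<^sup>2 / 2)"
    by (simp add: exp_add[symmetric])
  finally have "exp (- 50) \<le> exp (- 1\<^sup>2 / 2) / (3 :: real)"
    by simp
  also have "\<dots> \<le> std_normal_density 1"
    unfolding std_normal_density_def using sqrt_two_pi_bounds(2) by (simp add: divide_simps)
  also have "\<dots> \<le> 2 * gauss_tail 1"
    using gauss_tail_ge[of 1] by simp
  finally show ?thesis .
qed

lemma two_gauss_tail_le_exp_neg_50: "2 * gauss_tail (49 / 5) \<le> exp (- 50)"
proof -
  have "exp (99 / 50 :: real) \<le> exp 1 * exp 1"
    by (simp add: exp_add[symmetric])
  also have "\<dots> \<le> 3 * 3"
    using exp_le by (intro mult_mono) auto
  finally have "exp (99 / 50) * exp (- 50) / sqrt (2 * pi) \<le> 9 * exp (- 50) / 2"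
    using sqrt_two_pi_bounds(1) by (intro frac_le mult_right_mono) auto
  moreover have "std_normal_density (49 / 5) = exp (99 / 50) * exp (- 50) / sqrt (2 * pi)"
    unfolding std_normal_density_def by (simp add: exp_add[symmetric] power2_eq_square)
  ultimately have "std_normal_density (49 / 5) \<le> 9 * exp (- 50) / 2"
    by simp
  moreover have "gauss_tail (49 / 5) \<le> std_normal_density (49 / 5) * 5 / 49"
    using gauss_tail_le[of "49 / 5"] by simp
  ultimately show ?thesis
    using exp_gt_zero[of "- 50"] by linarith
qed

lemma obtain_two_gauss_tail_eq_exp_neg_50:
  obtains a where "1 \<le> a" "a \<le> 49 / 5" "2 * gauss_tail a = exp (- 50)"
proof -
  have "continuous_on {1..49 / 5} (\<lambda>a. 2 * gauss_tail a)"
    by (intro continuous_intros continuous_on_subset[OF continuous_on_gauss_tail]) auto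
  then show ?thesis
    using IVT2'[of "\<lambda>a. 2 * gauss_tail a", OF two_gauss_tail_le_exp_neg_50 exp_neg_50_le_two_gauss_tail_1]
      that by auto
qed

theorem lemma3:
  shows "\<exists>w a :: real. w > 0 \<and> a > 0 \<and>
           gauss_measure (cball (0 :: real^2) w) = gauss_measure {-a<..<a} \<and>
           gauss_boundary (cball (0 :: real^2) w) > gauss_boundary {-a<..<a}"
proof -
  obtain a where a: "1 \<le> a" "a \<le> 49 / 5" "2 * gauss_tail a = exp (- 10\<^sup>2 / 2)"
    using obtain_two_gauss_tail_eq_exp_neg_50 by auto
  have dim: "DIM(real^2) = 2"
    by simp
  have same_measure: "gauss_measure (cball (0 :: real^2) 10) = gauss_measure {-a<..<a}"
    using a gauss_measure_cball_plane[OF dim, of 10] gauss_measure_symmetric_interval[of a] by simp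
  have "0 \<le> (a - 1) * (49 / 5 - a)"
    using a by simp
  also have "\<dots> = 54 / 5 * a - a\<^sup>2 - 49 / 5"
    by (simp add: field_simps power2_eq_square)
  finally have "a\<^sup>2 + 1 < 10 * a"
    using a by linarith
  then have "2 * std_normal_density a < 10 * exp (- 10\<^sup>2 / 2)"
    using a by (intro two_std_normal_density_less)
  then have "gauss_boundary {-a<..<a} < ereal (10 * exp (- 10\<^sup>2 / 2))"
    using gauss_boundary_symmetric_interval_le[of a] a(1) by (simp add: order_le_less_trans)
  also have "\<dots> \<le> gauss_boundary (cball (0 :: real^2) 10)"
    using dim by (rule gauss_boundary_cball_plane_ge) simp
  finally show ?thesis
    using same_measure a(1) by (intro exI[of _ 10] exI[of _ a]) auto
qed

end
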